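(* Let $n\geq 0$ be an integer, $r,s\in\mathbf{N}$ and $k\in\mathbf{Z}$. Then \[\tilde{A}_{n}^{(r,k)}(x)=\sum_{m=0}^{n}\left\{\sum_{l=0}^{n-m}\binom{n}{l}S_{1}(n-l,m)\tilde{A}_{l}^{(r+s,k)}(s)\right\}B_{m}^{(s)}(x).\]
   Context: For $k\in\mathbf{Z}$, $Lif_{k}(x)=\sum_{m=0}^{\infty}\frac{x^{m}}{m!(m+1)^{k}}$. For integers $r\geq 0$, $k\in\mathbf{Z}$, the polynomials $\tilde{A}_{n}^{(r,k)}(x)$ are defined by \[\left(\frac{t}{(1+t)\log(1+t)}\right)^{r}Lif_{k}\left(-\log(1+t)\right)(1+t)^{x}=\sum_{n=0}^{\infty}\tilde{A}_{n}^{(r,k)}(x)\frac{t^{n}}{n!}.\] The Bernoulli polynomials of order $s$ are defined by $\left(\frac{t}{e^{t}-1}\right)^{s}e^{xt}=\sum_{n=0}^{\infty}B_{n}^{(s)}(x)\frac{t^{n}}{n!}$. $S_{1}(n,m)$ denotes the signed Stirling numbers of the first kind, defined by $x(x-1)\cdots(x-n+1)=\sum_{m=0}^{n}S_{1}(n,m)x^{m}$. *)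

theory Defs
  imports "HOL-Computational_Algebra.Computational_Algebra"
begin

text \<open>Power series of log(1+t) is fps_ln 1; (1+t)^x is fps_binomial x.\<close>

definition Lif_fps :: "int \<Rightarrow> real fps" where
  "Lif_fps k = Abs_fps (\<lambda>m. 1 / (fact m * (of_nat (m + 1)) powi k))"

definition Atilde_gf :: "nat \<Rightarrow> int \<Rightarrow> real \<Rightarrow> real fps" where
  "Atilde_gf r k x =
     (fps_X / ((1 + fps_X) * fps_ln 1)) ^ r
     * (Lif_fps k oo (- fps_ln 1))
     * fps_binomial x"

definition Atilde :: "nat \<Rightarrow> int \<Rightarrow> nat \<Rightarrow> real \<Rightarrow> real" where
  "Atilde r k n x = fact n * (Atilde_gf r k x $ n)"

definition bernoulli_gf :: "nat \<Rightarrow> real \<Rightarrow> real fps" where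
  "bernoulli_gf s x = (fps_X / (fps_exp 1 - 1)) ^ s * fps_exp x"

definition bernoulli_poly_ord :: "nat \<Rightarrow> nat \<Rightarrow> real \<Rightarrow> real" where
  "bernoulli_poly_ord s n x = fact n * (bernoulli_gf s x $ n)"

definition S1 :: "nat \<Rightarrow> nat \<Rightarrow> int" where
  "S1 n m = coeff (\<Prod>i<n. [:- of_nat i, 1:]) m"

end

theory Submission
  imports Defs
begin

text \<open>
  Let L = log(1+t). Substituting L for t in the generating function (t/(e^t-1))^s e^(xt) of the
  Bernoulli polynomials gives (L/t)^s (1+t)^x, and multiplying by the generating function of
  Atilde_n^(r+s,k)(s) cancels (L/t)^s against its surplus factor (t/((1+t)L))^s (1+t)^s: what
  remains is the generating function of Atilde_n^(r,k)(x). Comparing coefficients gives the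
  theorem, because L^m/m! is the exponential generating function of S1(n,m): both
  sum_m S1(n,m) x^m and n! [t^n] e^(xL) = n! [t^n] (1+t)^x equal x(x-1)...(x-n+1).
\<close>

lemma fps_exp_compose_ln: "fps_exp c oo fps_ln 1 = fps_binomial (c :: 'a :: field_char_0)"
proof -
  let ?a = "fps_exp c oo fps_ln 1"
  have "fps_deriv ?a = (fps_deriv (fps_exp c) oo fps_ln 1) * fps_deriv (fps_ln 1)"
    by (rule fps_compose_deriv) simp
  also have "\<dots> = (fps_const c * ?a) / (1 + fps_X)"
    by (simp add: fps_ln_deriv fps_compose_mult_distrib fps_divide_unit)
  finally have "?a = fps_const (?a $ 0) * fps_binomial c"
    using fps_binomial_ODE_unique by blast
  then show ?thesis by simp
qed

definition falling_factorial_poly :: "nat \<Rightarrow> 'a :: comm_ring_1 poly" where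
  "falling_factorial_poly n = (\<Prod>i<n. [:- of_nat i, 1:])"

lemma poly_falling_factorial_poly:
  "poly (falling_factorial_poly n) x = fact n * (x gchoose n :: 'a :: field_char_0)"
  by (simp add: falling_factorial_poly_def poly_prod gbinomial_mult_fact atLeast0LessThan)

lemma map_poly_of_int_falling_factorial_poly:
  "map_poly of_int (falling_factorial_poly n) = (falling_factorial_poly n :: 'a :: comm_ring_1 poly)"
proof (induction n)
  case (Suc n)
  have map_poly_mult: "map_poly (of_int :: int \<Rightarrow> 'a) (p * q) = map_poly of_int p * map_poly of_int q"
    for p q by (rule poly_eqI) (simp add: coeff_map_poly coeff_mult)
  show ?case
    using Suc.IH unfolding falling_factorial_poly_def prod.lessThan_Suc map_poly_mult
    by (simp add: map_poly_pCons)
qed (simp add: falling_factorial_poly_def)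

lemma of_int_S1: "of_int (S1 n m) = coeff (falling_factorial_poly n :: 'a :: comm_ring_1 poly) m"
  by (simp add: S1_def falling_factorial_poly_def [symmetric] coeff_map_poly
      flip: map_poly_of_int_falling_factorial_poly [where 'a = 'a])

lemma fps_ln_power_nth:
  assumes "m \<le> n"
  shows "fps_ln 1 ^ m $ n = of_int (S1 n m) * fact m / (fact n :: 'a :: field_char_0)"
proof -
  define q :: "'a poly" where "q = (\<Sum>j\<le>n. monom (fact n / fact j * (fps_ln 1 ^ j $ n)) j)"
  have "poly (falling_factorial_poly n) x = poly q x" for x
  proof -
    have "poly (falling_factorial_poly n) x = fact n * ((fps_exp x oo fps_ln 1) $ n)"
      by (simp add: poly_falling_factorial_poly fps_exp_compose_ln)
    also have "\<dots> = poly q x"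
      by (simp add: q_def fps_compose_nth poly_sum poly_monom sum_distrib_left atLeast0AtMost
          field_simps)
    finally show ?thesis .
  qed
  then have "falling_factorial_poly n = q"
    using poly_eq_poly_eq_iff by blast
  then have "coeff (falling_factorial_poly n) m = coeff q m"
    by simp
  also have "\<dots> = fact n / fact m * (fps_ln 1 ^ m $ n)"
    using assms by (simp add: q_def coeff_sum)
  finally show ?thesis by (simp add: of_int_S1 field_simps)
qed

lemma bernoulli_kernel_compose_ln:
  "(fps_X / (fps_exp 1 - 1) oo fps_ln 1) * fps_X = (fps_ln 1 :: 'a :: field_char_0 fps)"
proof -
  have "(fps_exp 1 - 1 :: 'a fps) $ 1 \<noteq> 0" by simp
  then have "fps_X / (fps_exp 1 - 1) * (fps_exp 1 - 1) = (fps_X :: 'a fps)"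
    by (intro fps_times_divide_eq) (auto intro: subdegree_leI)
  moreover have "(fps_exp 1 - 1) oo fps_ln 1 = (fps_X :: 'a fps)"
    by (simp add: fps_compose_sub_distrib fps_exp_compose_ln fps_binomial_1)
  ultimately show ?thesis
    by (metis fps_compose_mult_distrib fps_X_fps_compose_startby0 fps_ln_0)
qed

lemma bernoulli_gf_compose_ln:
  "bernoulli_gf s x oo fps_ln 1 = (fps_X / (fps_exp 1 - 1) oo fps_ln 1) ^ s * fps_binomial x"
  by (simp add: bernoulli_gf_def fps_compose_mult_distrib fps_compose_power fps_exp_compose_ln)

lemma Atilde_kernel_cancel:
  "fps_X / ((1 + fps_X) * fps_ln 1) * (1 + fps_X) * (fps_X / (fps_exp 1 - 1) oo fps_ln 1)
     = (1 :: real fps)"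
proof -
  let ?g = "(1 + fps_X) * fps_ln (1 :: real)"
  have "fps_ln 1 $ 1 \<noteq> (0 :: real)" by (simp add: fps_ln_nth)
  then have "fps_ln (1 :: real) \<noteq> 0" by auto
  moreover have "subdegree (fps_ln (1 :: real)) = 1"
    by (rule subdegreeI) (auto simp: fps_ln_nth)
  moreover have "1 + fps_X \<noteq> (0 :: real fps)" "subdegree (1 + fps_X :: real fps) = 0"
    by (auto simp: fps_eq_iff subdegree_eq_0_iff dest: spec [of _ 0])
  ultimately have "?g \<noteq> 0" "subdegree ?g = 1"
    by (simp_all add: subdegree_mult)
  then have "fps_X / ?g * ?g = fps_X"
    by (intro fps_times_divide_eq) auto
  then have "(fps_X / ?g * (1 + fps_X) * (fps_X / (fps_exp 1 - 1) oo fps_ln 1)) * fps_X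
      = 1 * fps_X"
    by (simp only: mult.assoc bernoulli_kernel_compose_ln mult_1)
  then show ?thesis
    by (rule mult_right_cancel [THEN iffD1, rotated]) simp
qed

lemma Atilde_gf_eq_mult_bernoulli_gf_compose_ln:
  "Atilde_gf r k x = Atilde_gf (r + s) k (of_nat s) * (bernoulli_gf s x oo fps_ln 1)"
proof -
  define P where "P = fps_X / ((1 + fps_X) * fps_ln (1 :: real))"
  define Q where "Q = fps_X / (fps_exp (1 :: real) - 1) oo fps_ln 1"
  have "Atilde_gf (r + s) k (of_nat s) * (bernoulli_gf s x oo fps_ln 1)
      = Atilde_gf r k x * (P * (1 + fps_X) * Q) ^ s"
    by (simp add: Atilde_gf_def bernoulli_gf_compose_ln fps_binomial_of_nat P_def Q_def
        power_add power_mult_distrib ac_simps)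
  then show ?thesis
    using Atilde_kernel_cancel by (simp add: P_def Q_def)
qed

lemma bernoulli_gf_compose_ln_nth:
  "(bernoulli_gf s x oo fps_ln 1) $ n
     = (\<Sum>m = 0..n. of_int (S1 n m) * bernoulli_poly_ord s m x) / fact n"
proof -
  have "(bernoulli_gf s x oo fps_ln 1) $ n = (\<Sum>m = 0..n. bernoulli_gf s x $ m * (fps_ln 1 ^ m $ n))"
    by (simp add: fps_compose_nth)
  also have "\<dots> = (\<Sum>m = 0..n. of_int (S1 n m) * bernoulli_poly_ord s m x / fact n)"
    by (intro sum.cong refl) (simp add: fps_ln_power_nth bernoulli_poly_ord_def)
  finally show ?thesis by (simp add: sum_divide_distrib)
qed

lemma sum_triangle_swap:
  fixes f :: "nat \<Rightarrow> nat \<Rightarrow> 'a :: comm_monoid_add"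
  shows "(\<Sum>l = 0..n. \<Sum>m = 0..n - l. f l m) = (\<Sum>m = 0..n. \<Sum>l = 0..n - m. f l m)"
proof -
  have "(\<Sum>l = 0..n. \<Sum>m = 0..n - l. f l m)
      = (\<Sum>l = 0..n. \<Sum>m \<in> {m. m \<in> {0..n} \<and> l + m \<le> n}. f l m)"
    by (intro sum.cong refl) auto
  also have "\<dots> = (\<Sum>m = 0..n. \<Sum>l \<in> {l. l \<in> {0..n} \<and> l + m \<le> n}. f l m)"
    by (rule sum.swap_restrict) auto
  also have "\<dots> = (\<Sum>m = 0..n. \<Sum>l = 0..n - m. f l m)"
    by (intro sum.cong refl) auto
  finally show ?thesis .
qed

theorem theorem7:
  fixes n r s :: nat and k :: int and x :: real
  shows "Atilde r k n x =
    (\<Sum>m = 0..n. (\<Sum>l = 0..n - m. of_nat (n choose l) * of_int (S1 (n - l) m)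
        * Atilde (r + s) k l (of_nat s)) * bernoulli_poly_ord s m x)"
proof -
  let ?A = "Atilde_gf (r + s) k (of_nat s)" and ?C = "bernoulli_gf s x oo fps_ln 1"
  have "Atilde r k n x = (\<Sum>l = 0..n. fact n * (?A $ l * ?C $ (n - l)))"
    by (simp add: Atilde_def Atilde_gf_eq_mult_bernoulli_gf_compose_ln [of r k x s]
        fps_mult_nth sum_distrib_left)
  also have "\<dots> = (\<Sum>l = 0..n. \<Sum>m = 0..n - l. of_nat (n choose l) * of_int (S1 (n - l) m)
        * Atilde (r + s) k l (of_nat s) * bernoulli_poly_ord s m x)"
    by (intro sum.cong refl)
      (simp add: bernoulli_gf_compose_ln_nth Atilde_def binomial_fact sum_distrib_left field_simps)
  also have "\<dots> = (\<Sum>m = 0..n. (\<Sum>l = 0..n - m. of_nat (n choose l) * of_int (S1 (n - l) m)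
        * Atilde (r + s) k l (of_nat s)) * bernoulli_poly_ord s m x)"
    by (subst sum_triangle_swap) (simp add: sum_distrib_right)
  finally show ?thesis .
qed

end
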